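(* Let $A\in\mathbb{R}^{n\times n}$, $B\in\mathbb{R}^{n\times m}$, $C\in\mathbb{R}^{q\times n}$, and let $\tilde C\in\mathbb{R}^{q_m\times n}$ consist of a subset of the rows of $C$. Suppose the sequences $g_k\in\mathbb{R}^{q\times m}$, $\tilde g_k\in\mathbb{R}^{q_m\times m}$ satisfy $g_k=CA^{k-1}B$ and $\tilde g_k=\tilde CA^{k-1}B$ for all $k\ge 1$. If $(A,\tilde C)$ is an observable pair, then there exists a positive integer $p$ such that for all positive integers $r,p_f$, $$\mathrm{Null}\big(T_1^{p,r}(\{\tilde g_k\})\big)\subseteq \mathrm{Null}\big(T_{p+1}^{p_f,r}(\{g_k\})\big).$$
   Context: $(A,\tilde C)$ is an observable pair if the matrix obtained by stacking $\tilde C,\tilde CA,\dots,\tilde CA^{n-1}$ vertically has full column rank. For a sequence of matrices $\{h_k\}$ and positive integers $j,a,b$, $T_j^{a,b}(\{h_k\})$ denotes the $a\times b$ block matrix whose $(\mu,\nu)$ block ($1\le\mu\le a$, $1\le\nu\le b$) is $h_{j+a-\mu+\nu-1}$; so its first block row is $(h_{j+a-1},\dots,h_{j+a+b-2})$ and its last block row is $(h_j,\dots,h_{j+b-1})$. *)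

theory Defs
  imports "Jordan_Normal_Form.Matrix_Kernel" "Jordan_Normal_Form.DL_Rank"
begin

definition obs_matrix :: "real mat \<Rightarrow> real mat \<Rightarrow> real mat" where
  "obs_matrix A Ct = (let n = dim_col A; qm = dim_row Ct in
     mat (n * qm) n (\<lambda>(i, j). (Ct * A ^\<^sub>m (i div qm)) $$ (i mod qm, j)))"

definition observable_pair :: "real mat \<Rightarrow> real mat \<Rightarrow> bool" where
  "observable_pair A Ct \<longleftrightarrow>
     vec_space.rank (dim_col A * dim_row Ct) (obs_matrix A Ct) = dim_col A"

text \<open>Block Toeplitz matrix T_j^{a,b}({h_k}) with blocks of size qq x mm.
  0-based block indices (mu', nu') correspond to (mu'+1, nu'+1), so the
  block is h (j + a - 1 - mu' + nu').\<close>
definition block_toeplitz ::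
  "nat \<Rightarrow> nat \<Rightarrow> (nat \<Rightarrow> real mat) \<Rightarrow> nat \<Rightarrow> nat \<Rightarrow> nat \<Rightarrow> real mat" where
  "block_toeplitz qq mm h j a b =
     mat (a * qq) (b * mm)
       (\<lambda>(i, l). h (j + a - 1 - i div qq + l div mm) $$ (i mod qq, l mod mm))"

end

theory Submission
  imports Defs
begin

(* Let R = [B, AB, ..., A^(r-1) B] be the controllability matrix. For Markov parameters
   h_k = M A^(k-1) B, block row mu (counted from 0) of T_j^(a,r)({h_k}) is M A^(j+a-2-mu) R,
   so T v depends on v only through w = R v. If T_1^(p,r)({gt_k}) v = 0, then Ct A^s w = 0
   for all s < p; for p >= n observability of (A, Ct) forces w = 0, and then
   T_(p+1)^(pf,r)({g_k}) v = 0 as well. *)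

lemma (in vec_space) non_distinct_cols_rank_less:
  assumes A: "A \<in> carrier_mat n nc" and "\<not> distinct (cols A)"
  shows "rank A < nc"
proof -
  obtain S where S: "maximal S (\<lambda>T. T \<subseteq> set (cols A) \<and> lin_indpt T)"
    using maximal_exists[of "\<lambda>T. T \<subseteq> set (cols A) \<and> lin_indpt T" "card (set (cols A))" "{}"]
    by (meson List.finite_set card_mono empty_iff empty_subsetI finite_lin_indpt2 rev_finite_subset)
  have "card S \<le> card (set (cols A))"
    using S by (simp add: card_mono maximal_def)
  also have "\<dots> < length (cols A)"
    using \<open>\<not> distinct (cols A)\<close> card_distinct card_length nat_less_le by metis
  finally show ?thesis
    using rank_card_indpt[OF A S] A by simp
qed

lemma (in vec_space) full_rank_mult_vec_eq_0:
  assumes A: "A \<in> carrier_mat n nc" and rank: "rank A = nc"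
    and w: "w \<in> carrier_vec nc" and Aw: "A *\<^sub>v w = 0\<^sub>v n"
  shows "w = 0\<^sub>v nc"
proof (rule ccontr)
  assume "w \<noteq> 0\<^sub>v nc"
  have "distinct (cols A)"
    using non_distinct_cols_rank_less[OF A] rank by fastforce
  with full_rank_lin_indpt[OF A rank] lin_depI[OF A w \<open>w \<noteq> 0\<^sub>v nc\<close> Aw]
  show False by simp
qed

lemma pow_mat_add:
  assumes A: "A \<in> carrier_mat n n"
  shows "A ^\<^sub>m (a + b) = A ^\<^sub>m a * A ^\<^sub>m b"
proof (induction b)
  case (Suc b)
  have "A ^\<^sub>m (a + Suc b) = A ^\<^sub>m a * A ^\<^sub>m b * A"
    using Suc by simp
  also have "\<dots> = A ^\<^sub>m a * (A ^\<^sub>m b * A)"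
    using A by (intro assoc_mult_mat) auto
  finally show ?case by simp
qed (use A in simp)

definition ctrb_matrix :: "'a :: semiring_1 mat \<Rightarrow> 'a mat \<Rightarrow> nat \<Rightarrow> 'a mat" where
  "ctrb_matrix A B r = mat (dim_row B) (r * dim_col B)
     (\<lambda>(k, c). (A ^\<^sub>m (c div dim_col B) * B) $$ (k, c mod dim_col B))"

lemma ctrb_matrix_carrier:
  "B \<in> carrier_mat n m \<Longrightarrow> ctrb_matrix A B r \<in> carrier_mat n (r * m)"
  unfolding ctrb_matrix_def by simp

lemma col_ctrb_matrix:
  assumes A: "A \<in> carrier_mat n n" and B: "B \<in> carrier_mat n m" and c: "c < r * m"
  shows "col (ctrb_matrix A B r) c = col (A ^\<^sub>m (c div m) * B) (c mod m)"
proof -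
  have "m > 0" using c by (cases m) auto
  then show ?thesis
    using A B c unfolding ctrb_matrix_def by auto
qed

lemma block_toeplitz_carrier: "block_toeplitz q m h j a b \<in> carrier_mat (a * q) (b * m)"
  unfolding block_toeplitz_def by simp

lemma row_block_toeplitz_markov:
  assumes A: "A \<in> carrier_mat n n" and B: "B \<in> carrier_mat n m" and M: "M \<in> carrier_mat q0 n"
    and h: "\<forall>k\<ge>1. h k = M * A ^\<^sub>m (k - 1) * B"
    and j: "j \<ge> 1" and i: "i < a * q0"
  shows "row (block_toeplitz q0 m h j a r) i
       = row (M * A ^\<^sub>m (j + a - 2 - i div q0) * ctrb_matrix A B r) (i mod q0)"
proof -
  define e where "e = j + a - 2 - i div q0"
  define X where "X = M * A ^\<^sub>m e"
  have X: "X \<in> carrier_mat q0 n" unfolding X_def using M A by simp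
  have R: "ctrb_matrix A B r \<in> carrier_mat n (r * m)" by (rule ctrb_matrix_carrier[OF B])
  have "q0 > 0" using i by (cases q0) auto
  then have a0: "i mod q0 < q0" by simp
  have "i div q0 < a" using i by (simp add: less_mult_imp_div_less)
  then have shift: "j + a - 1 - i div q0 + \<nu> = Suc (e + \<nu>)" for \<nu>
    using j unfolding e_def by simp
  have entry: "block_toeplitz q0 m h j a r $$ (i, c) = (X * ctrb_matrix A B r) $$ (i mod q0, c)"
    if c: "c < r * m" for c
  proof -
    let ?Y = "A ^\<^sub>m (c div m)"
    have "m > 0" using c by (cases m) auto
    have Y: "?Y \<in> carrier_mat n n" using A by simp
    have "block_toeplitz q0 m h j a r $$ (i, c) = h (Suc (e + c div m)) $$ (i mod q0, c mod m)"
      using i c shift[of "c div m"] unfolding block_toeplitz_def by simp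
    also have "h (Suc (e + c div m)) = M * (A ^\<^sub>m e * ?Y) * B"
      using h by (simp add: pow_mat_add[OF A])
    also have "\<dots> = X * ?Y * B"
      unfolding X_def using assoc_mult_mat[of M q0 n "A ^\<^sub>m e" n ?Y n] M A by simp
    also have "\<dots> = X * (?Y * B)"
      using X Y B by (rule assoc_mult_mat)
    also have "(X * (?Y * B)) $$ (i mod q0, c mod m) = (X * ctrb_matrix A B r) $$ (i mod q0, c)"
      using X Y B R a0 c \<open>m > 0\<close> by (simp add: col_ctrb_matrix[OF A B c])
    finally show ?thesis .
  qed
  show ?thesis
    unfolding e_def[symmetric] X_def[symmetric]
  proof (rule eq_vecI)
    fix c assume "c < dim_vec (row (X * ctrb_matrix A B r) (i mod q0))"
    then have c: "c < r * m" using R by simp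
    have "row (block_toeplitz q0 m h j a r) i $ c = block_toeplitz q0 m h j a r $$ (i, c)"
      using i c by (simp add: block_toeplitz_def)
    also have "\<dots> = (X * ctrb_matrix A B r) $$ (i mod q0, c)"
      by (rule entry[OF c])
    also have "\<dots> = row (X * ctrb_matrix A B r) (i mod q0) $ c"
      using a0 c X R by simp
    finally show "row (block_toeplitz q0 m h j a r) i $ c = row (X * ctrb_matrix A B r) (i mod q0) $ c" .
  next
    show "dim_vec (row (block_toeplitz q0 m h j a r) i) = dim_vec (row (X * ctrb_matrix A B r) (i mod q0))"
      using R by (simp add: block_toeplitz_def)
  qed
qed

lemma block_toeplitz_markov_mult_vec:
  assumes A: "A \<in> carrier_mat n n" and B: "B \<in> carrier_mat n m" and M: "M \<in> carrier_mat q0 n"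
    and h: "\<forall>k\<ge>1. h k = M * A ^\<^sub>m (k - 1) * B"
    and j: "j \<ge> 1" and v: "v \<in> carrier_vec (r * m)" and i: "i < a * q0"
  shows "(block_toeplitz q0 m h j a r *\<^sub>v v) $ i
       = (M * A ^\<^sub>m (j + a - 2 - i div q0) *\<^sub>v (ctrb_matrix A B r *\<^sub>v v)) $ (i mod q0)"
proof -
  let ?X = "M * A ^\<^sub>m (j + a - 2 - i div q0)"
  have X: "?X \<in> carrier_mat q0 n" using M A by simp
  have R: "ctrb_matrix A B r \<in> carrier_mat n (r * m)" by (rule ctrb_matrix_carrier[OF B])
  have "q0 > 0" using i by (cases q0) auto
  have "(block_toeplitz q0 m h j a r *\<^sub>v v) $ i = row (block_toeplitz q0 m h j a r) i \<bullet> v"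
    using i carrier_matD[OF block_toeplitz_carrier] by simp
  also have "\<dots> = row (?X * ctrb_matrix A B r) (i mod q0) \<bullet> v"
    by (simp only: row_block_toeplitz_markov[OF A B M h j i])
  also have "\<dots> = (?X * ctrb_matrix A B r *\<^sub>v v) $ (i mod q0)"
    using carrier_matD[OF X] \<open>q0 > 0\<close> by simp
  also have "\<dots> = (?X *\<^sub>v (ctrb_matrix A B r *\<^sub>v v)) $ (i mod q0)"
    using X R v by simp
  finally show ?thesis .
qed

lemma block_toeplitz_markov_kernelI:
  assumes A: "A \<in> carrier_mat n n" and B: "B \<in> carrier_mat n m" and M: "M \<in> carrier_mat q0 n"
    and h: "\<forall>k\<ge>1. h k = M * A ^\<^sub>m (k - 1) * B"
    and j: "j \<ge> 1" and v: "v \<in> carrier_vec (r * m)"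
    and ctrb_v: "ctrb_matrix A B r *\<^sub>v v = 0\<^sub>v n"
  shows "v \<in> mat_kernel (block_toeplitz q0 m h j a r)"
proof (rule mat_kernelI[OF block_toeplitz_carrier v], rule eq_vecI)
  fix i assume "i < dim_vec (0\<^sub>v (a * q0) :: real vec)"
  then have i: "i < a * q0" by simp
  let ?X = "M * A ^\<^sub>m (j + a - 2 - i div q0)"
  have "q0 > 0" using i by (cases q0) auto
  then have "row ?X (i mod q0) \<in> carrier_vec n"
    using M A by (intro row_carrier_vec[of _ q0]) simp_all
  then show "(block_toeplitz q0 m h j a r *\<^sub>v v) $ i = 0\<^sub>v (a * q0) $ i"
    using i \<open>q0 > 0\<close> M by (simp add: block_toeplitz_markov_mult_vec[OF A B M h j v i] ctrb_v)
qed (simp add: block_toeplitz_def)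

lemma obs_matrix_carrier:
  "A \<in> carrier_mat n n \<Longrightarrow> Ct \<in> carrier_mat qm n \<Longrightarrow> obs_matrix A Ct \<in> carrier_mat (n * qm) n"
  unfolding obs_matrix_def by (simp add: Let_def)

lemma obs_matrix_mult_vec:
  assumes A: "A \<in> carrier_mat n n" and Ct: "Ct \<in> carrier_mat qm n"
    and w: "w \<in> carrier_vec n" and i: "i < n * qm"
  shows "(obs_matrix A Ct *\<^sub>v w) $ i = (Ct * A ^\<^sub>m (i div qm) *\<^sub>v w) $ (i mod qm)"
proof -
  have "qm > 0" using i by (cases qm) auto
  then show ?thesis
    using A Ct w i unfolding obs_matrix_def by (simp add: Let_def scalar_prod_def)
qed

lemma observable_pair_zero_outputs_imp_zero:
  assumes A: "A \<in> carrier_mat n n" and Ct: "Ct \<in> carrier_mat qm n" and obs: "observable_pair A Ct"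
    and w: "w \<in> carrier_vec n" and unobs: "\<forall>s<n. Ct * A ^\<^sub>m s *\<^sub>v w = 0\<^sub>v qm"
  shows "w = 0\<^sub>v n"
proof (rule vec_space.full_rank_mult_vec_eq_0[OF obs_matrix_carrier[OF A Ct] _ w])
  show "vec_space.rank (n * qm) (obs_matrix A Ct) = n"
    using obs A Ct unfolding observable_pair_def by simp
  show "obs_matrix A Ct *\<^sub>v w = 0\<^sub>v (n * qm)"
  proof (rule eq_vecI)
    fix i assume "i < dim_vec (0\<^sub>v (n * qm) :: real vec)"
    then have i: "i < n * qm" by simp
    then have "i div qm < n" "qm > 0" by (auto simp: less_mult_imp_div_less intro: gr0I)
    then show "(obs_matrix A Ct *\<^sub>v w) $ i = 0\<^sub>v (n * qm) $ i"
      using i unobs by (simp add: obs_matrix_mult_vec[OF A Ct w i])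
  qed (use obs_matrix_carrier[OF A Ct] in simp)
qed

lemma observable_block_toeplitz_markov_kernelD:
  assumes A: "A \<in> carrier_mat n n" and B: "B \<in> carrier_mat n m" and Ct: "Ct \<in> carrier_mat qm n"
    and h: "\<forall>k\<ge>1. h k = Ct * A ^\<^sub>m (k - 1) * B" and obs: "observable_pair A Ct"
    and p: "n \<le> p" and v: "v \<in> mat_kernel (block_toeplitz qm m h 1 p r)"
  shows "ctrb_matrix A B r *\<^sub>v v = 0\<^sub>v n"
proof (rule observable_pair_zero_outputs_imp_zero[OF A Ct obs])
  have v_dim: "v \<in> carrier_vec (r * m)" and Tv: "block_toeplitz qm m h 1 p r *\<^sub>v v = 0\<^sub>v (p * qm)"
    using mat_kernelD[OF block_toeplitz_carrier v] by auto
  show "ctrb_matrix A B r *\<^sub>v v \<in> carrier_vec n"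
    by (rule mult_mat_vec_carrier[OF ctrb_matrix_carrier[OF B] v_dim])
  show "\<forall>s<n. Ct * A ^\<^sub>m s *\<^sub>v (ctrb_matrix A B r *\<^sub>v v) = 0\<^sub>v qm"
  proof (intro allI impI eq_vecI)
    fix s a0 assume s: "s < n" and "a0 < dim_vec (0\<^sub>v qm :: real vec)"
    then have a0: "a0 < qm" by simp
    \<comment> \<open>block row p - 1 - s of T_1^{p,r} carries the power A^s\<close>
    define i where "i = (p - 1 - s) * qm + a0"
    have "i < Suc (p - 1 - s) * qm" unfolding i_def using a0 by simp
    also have "\<dots> \<le> p * qm" using s p by (intro mult_le_mono1) simp
    finally have i: "i < p * qm" .
    have "i div qm = p - 1 - s" "i mod qm = a0" unfolding i_def using a0 by auto
    then have "1 + p - 2 - i div qm = s" using s p by simp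
    with block_toeplitz_markov_mult_vec[OF A B Ct h order.refl v_dim i] Tv i \<open>i mod qm = a0\<close>
    show "(Ct * A ^\<^sub>m s *\<^sub>v (ctrb_matrix A B r *\<^sub>v v)) $ a0 = 0\<^sub>v qm $ a0"
      using a0 by simp
  qed (use Ct A in simp)
qed

theorem theorem3:
  fixes A B C Ct :: "real mat" and g gt :: "nat \<Rightarrow> real mat"
    and n m q qm :: nat and idx :: "nat \<Rightarrow> nat"
  assumes A: "A \<in> carrier_mat n n"
    and B: "B \<in> carrier_mat n m"
    and C: "C \<in> carrier_mat q n"
    and Ct: "Ct \<in> carrier_mat qm n"
    and idx_inj: "inj_on idx {..<qm}"
    and idx_range: "\<forall>i<qm. idx i < q"
    and Ct_rows: "\<forall>i<qm. row Ct i = row C (idx i)"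
    and g: "\<forall>k\<ge>1. g k = C * A ^\<^sub>m (k - 1) * B"
    and gt: "\<forall>k\<ge>1. gt k = Ct * A ^\<^sub>m (k - 1) * B"
    and obs: "observable_pair A Ct"
  shows "\<exists>p::nat. p > 0 \<and> (\<forall>r pf::nat. r > 0 \<longrightarrow> pf > 0 \<longrightarrow>
           mat_kernel (block_toeplitz qm m gt 1 p r)
             \<subseteq> mat_kernel (block_toeplitz q m g (p + 1) pf r))"
proof (intro exI[of _ "Suc n"] conjI allI impI subsetI)
  fix r pf v assume v: "v \<in> mat_kernel (block_toeplitz qm m gt 1 (Suc n) r)"
  then have "v \<in> carrier_vec (r * m)"
    using mat_kernelD(1)[OF block_toeplitz_carrier] by blast
  moreover have "ctrb_matrix A B r *\<^sub>v v = 0\<^sub>v n"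
    using observable_block_toeplitz_markov_kernelD[OF A B Ct gt obs _ v] by simp
  ultimately show "v \<in> mat_kernel (block_toeplitz q m g (Suc n + 1) pf r)"
    by (intro block_toeplitz_markov_kernelI[OF A B C g]) auto
qed simp

end
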